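(* Let $n,k$ be positive integers with $T_k(n)\neq\emptyset$. Let $G\in T_k(n)$ and let $z$ be a quasi vertex of $G$. If $\alpha<0$ and ${}^0R_{\alpha}(G)$ is minimum over $T_k(n)$, then $d(z)=n-1$. If $\alpha>0$ and ${}^0R_{\alpha}(G)$ is maximum over $T_k(n)$, then $d(z)=n-1$.
   Context: All graphs are finite, simple, undirected and connected. For a graph $G$ and real $\alpha\neq 0$, the zeroth-order general Randić index is ${}^0R_{\alpha}(G)=\sum_{v\in V(G)}d(v)^{\alpha}$, where $d(v)$ is the degree of $v$. A connected graph $G$ is a $k$-generalized quasi tree if there is a subset $V_k\subset V(G)$ with $|V_k|=k$ such that $G-V_k$ is a tree, but for every subset $V_{k-1}\subset V(G)$ with $|V_{k-1}|=k-1$, $G-V_{k-1}$ is not a tree; the vertices of such a set $V_k$ are called quasi vertices of $G$. $T_k(n)$ denotes the class of $k$-generalized quasi trees of order $n$. *)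

theory Defs
  imports Complex_Main
begin

definition simple_graph :: "nat set \<Rightarrow> nat set set \<Rightarrow> bool" where
  "simple_graph V E \<longleftrightarrow> finite V \<and>
     (\<forall>e\<in>E. \<exists>u v. u \<noteq> v \<and> u \<in> V \<and> v \<in> V \<and> e = {u, v})"

definition adj :: "nat set set \<Rightarrow> nat \<Rightarrow> nat \<Rightarrow> bool" where
  "adj E u v \<longleftrightarrow> u \<noteq> v \<and> {u, v} \<in> E"

definition degree :: "nat set \<Rightarrow> nat set set \<Rightarrow> nat \<Rightarrow> nat" where
  "degree V E v = card {u \<in> V. adj E v u}"

definition connected_graph :: "nat set \<Rightarrow> nat set set \<Rightarrow> bool" where
  "connected_graph V E \<longleftrightarrow> V \<noteq> {} \<and>
     (\<forall>u\<in>V. \<forall>v\<in>V. (u, v) \<in> {(a, b). adj E a b}\<^sup>*)"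

definition has_cycle :: "nat set \<Rightarrow> nat set set \<Rightarrow> bool" where
  "has_cycle V E \<longleftrightarrow> (\<exists>cs. length cs \<ge> 3 \<and> distinct cs \<and> set cs \<subseteq> V \<and>
     (\<forall>i < length cs. adj E (cs ! i) (cs ! ((i + 1) mod length cs))))"

definition is_tree :: "nat set \<Rightarrow> nat set set \<Rightarrow> bool" where
  "is_tree V E \<longleftrightarrow> simple_graph V E \<and> connected_graph V E \<and> \<not> has_cycle V E"

definition del_vertices :: "nat set \<Rightarrow> nat set set \<Rightarrow> nat set \<Rightarrow> nat set \<times> nat set set" where
  "del_vertices V E S = (V - S, {e \<in> E. e \<inter> S = {}})"

definition removal_tree :: "nat set \<Rightarrow> nat set set \<Rightarrow> nat set \<Rightarrow> bool" where
  "removal_tree V E S \<longleftrightarrow> S \<subseteq> V \<and> is_tree (fst (del_vertices V E S)) (snd (del_vertices V E S))"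

definition gen_quasi_tree :: "nat \<Rightarrow> nat set \<Rightarrow> nat set set \<Rightarrow> bool" where
  "gen_quasi_tree k V E \<longleftrightarrow> simple_graph V E \<and> connected_graph V E \<and>
     (\<exists>S. card S = k \<and> removal_tree V E S) \<and>
     (\<forall>S. S \<subseteq> V \<and> card S + 1 = k \<longrightarrow> \<not> removal_tree V E S)"

definition quasi_vertex :: "nat \<Rightarrow> nat set \<Rightarrow> nat set set \<Rightarrow> nat \<Rightarrow> bool" where
  "quasi_vertex k V E z \<longleftrightarrow> (\<exists>S. card S = k \<and> removal_tree V E S \<and> z \<in> S)"

definition T_class :: "nat \<Rightarrow> nat \<Rightarrow> (nat set \<times> nat set set) set" where
  "T_class k n = {(V, E). card V = n \<and> gen_quasi_tree k V E}"

definition zeroth_randic :: "real \<Rightarrow> nat set \<Rightarrow> nat set set \<Rightarrow> real" where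
  "zeroth_randic \<alpha> V E = (\<Sum>v\<in>V. real (degree V E v) powr \<alpha>)"

end

theory Submission
  imports Defs
begin

text \<open>Choose a set S of k quasi vertices containing z and join every vertex of S to all
  other vertices. Deleting S still leaves the same tree, and no set S' of k - 1 vertices
  works: if S' \<subseteq> S, the vertex of S - S' closes a triangle with an edge of the tree (which
  has at least two vertices, since a graph with k + 1 vertices would already become a tree
  after deleting k - 1 of them); otherwise two vertices of S - S' close a triangle with a
  third vertex outside S'. So the new graph is again in T_k(n), all degrees weakly
  increase, and z gains degree unless it already had degree n - 1. As t powr \<alpha> is strictly
  decreasing in t > 0 for \<alpha> < 0 and strictly increasing for \<alpha> > 0, an extremal graph
  admits no such improvement.\<close>

lemma adj_sym: "adj E a b \<Longrightarrow> adj E b a"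
  unfolding adj_def by (simp add: insert_commute)

lemma adj_mono: "E \<subseteq> E' \<Longrightarrow> adj E a b \<Longrightarrow> adj E' a b"
  unfolding adj_def by blast

lemma adj_del_vertices_iff:
  "adj {e \<in> E. e \<inter> S = {}} a b \<longleftrightarrow> adj E a b \<and> a \<notin> S \<and> b \<notin> S"
  unfolding adj_def by blast

lemma simple_graph_adj_in_vertices:
  assumes "simple_graph V E" "adj E a b"
  shows "b \<in> V"
proof -
  obtain u v where "u \<in> V" "v \<in> V" "{a, b} = {u, v}"
    using assms unfolding simple_graph_def adj_def by blast
  then show ?thesis by (auto simp: doubleton_eq_iff)
qed

lemma simple_graph_del_vertices:
  assumes "simple_graph V E"
  shows "simple_graph (V - S) {e \<in> E. e \<inter> S = {}}"
  using assms unfolding simple_graph_def by fastforce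

lemma connected_graph_mono:
  assumes "connected_graph V E" "E \<subseteq> E'"
  shows "connected_graph V E'"
proof -
  have "{(a, b). adj E a b} \<subseteq> {(a, b). adj E' a b}"
    using adj_mono[OF assms(2)] by blast
  then show ?thesis
    using assms(1) rtrancl_mono unfolding connected_graph_def by blast
qed

lemma connected_graph_ex_adj:
  assumes "connected_graph V E" "u \<in> V" "v \<in> V" "u \<noteq> v"
  obtains y where "adj E u y"
proof -
  have "(u, v) \<in> {(a, b). adj E a b}\<^sup>*"
    using assms unfolding connected_graph_def by blast
  then show ?thesis
    using assms(4) that by (cases rule: converse_rtranclE) auto
qed

lemma card_ge_2_obtain_distinct:
  assumes "card A \<ge> 2"
  obtains a b where "a \<in> A" "b \<in> A" "a \<noteq> b"
proof -
  obtain a B where "A = insert a B" "a \<notin> B" "1 \<le> card B"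
    using assms card_le_Suc_iff[of 1 A] by auto
  moreover then obtain b where "b \<in> B" by fastforce
  ultimately show ?thesis using that by blast
qed

lemma degree_le_card:
  assumes "finite V" "v \<in> V"
  shows "degree V E v \<le> card V - 1"
proof -
  have "{u \<in> V. adj E v u} \<subseteq> V - {v}" unfolding adj_def by blast
  then have "degree V E v \<le> card (V - {v})"
    unfolding degree_def using assms(1) by (simp add: card_mono)
  then show ?thesis using assms by simp
qed

lemma degree_mono:
  assumes "finite V" "E \<subseteq> E'"
  shows "degree V E v \<le> degree V E' v"
  unfolding degree_def using assms adj_mono[OF assms(2)]
  by (intro card_mono) auto

lemma degree_pos:
  assumes "simple_graph V E" "connected_graph V E" "card V \<ge> 2" "v \<in> V"
  shows "degree V E v \<ge> 1"
proof -
  obtain a b where "a \<in> V" "b \<in> V" "a \<noteq> b"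
    using assms(3) card_ge_2_obtain_distinct by blast
  then obtain u where "u \<in> V" "u \<noteq> v" by metis
  then obtain y where vy: "adj E v y"
    using connected_graph_ex_adj[OF assms(2) assms(4)] by metis
  then have "y \<in> {u \<in> V. adj E v u}"
    using simple_graph_adj_in_vertices[OF assms(1)] by blast
  moreover have "finite V" using assms(1) unfolding simple_graph_def by blast
  ultimately have "card {u \<in> V. adj E v u} > 0" by (auto simp: card_gt_0_iff)
  then show ?thesis unfolding degree_def by simp
qed

lemma has_cycle_triangle:
  assumes "a \<in> V" "b \<in> V" "c \<in> V" "adj E a b" "adj E b c" "adj E c a"
  shows "has_cycle V E"
proof -
  have distinct: "a \<noteq> b" "b \<noteq> c" "c \<noteq> a"
    using assms(4-6) unfolding adj_def by blast+
  have "adj E ([a, b, c] ! i) ([a, b, c] ! ((i + 1) mod 3))" if "i < 3" for i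
  proof -
    have "i = 0 \<or> i = 1 \<or> i = 2" using that by auto
    then show ?thesis using assms(4-6) by auto
  qed
  then show ?thesis
    unfolding has_cycle_def using assms(1-3) distinct
    by (intro exI[of _ "[a, b, c]"]) auto
qed

lemma is_tree_single_edge:
  assumes "simple_graph {a, b} F" "adj F a b"
  shows "is_tree {a, b} F"
proof -
  have "(a, b) \<in> {(p, q). adj F p q}\<^sup>*" "(b, a) \<in> {(p, q). adj F p q}\<^sup>*"
    using assms(2) adj_sym by blast+
  then have "connected_graph {a, b} F"
    unfolding connected_graph_def by auto
  moreover have "\<not> has_cycle {a, b} F"
  proof
    assume "has_cycle {a, b} F"
    then obtain cs where "length cs \<ge> 3" "distinct cs" "set cs \<subseteq> {a, b}"
      unfolding has_cycle_def by blast
    then have "3 \<le> card {a, b}"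
      by (metis card_mono distinct_card finite.emptyI finite.insertI order_trans)
    moreover have "card {a, b} \<le> 2" by (cases "a = b") auto
    ultimately show False by linarith
  qed
  ultimately show ?thesis using assms(1) unfolding is_tree_def by blast
qed

lemma tree_ex_edge:
  assumes "is_tree W F" "card W \<ge> 2"
  obtains u y where "u \<in> W" "y \<in> W" "adj F u y"
proof -
  obtain u v where uv: "u \<in> W" "v \<in> W" "u \<noteq> v"
    using assms(2) card_ge_2_obtain_distinct by blast
  have "connected_graph W F" "simple_graph W F" using assms(1) unfolding is_tree_def by blast+
  obtain y where "adj F u y" using connected_graph_ex_adj[OF \<open>connected_graph W F\<close> uv] .
  then show ?thesis
    using that uv(1) simple_graph_adj_in_vertices[OF \<open>simple_graph W F\<close>] by blast
qed

lemma removal_tree_complement_edge: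
  assumes "simple_graph V E" "adj E a b" "a \<in> V"
  shows "removal_tree V E (V - {a, b})"
proof -
  have b: "b \<in> V" using simple_graph_adj_in_vertices[OF assms(1,2)] .
  then have V: "V - (V - {a, b}) = {a, b}" using assms(3) by blast
  have "adj {e \<in> E. e \<inter> (V - {a, b}) = {}} a b"
    using assms(2) adj_del_vertices_iff by blast
  then show ?thesis
    unfolding removal_tree_def del_vertices_def
    using is_tree_single_edge simple_graph_del_vertices[OF assms(1), of "V - {a, b}"] V
    by auto
qed

lemma gen_quasi_tree_card_ge:
  assumes "gen_quasi_tree k V E" "k > 0"
  shows "card V \<ge> k + 2"
proof -
  have sg: "simple_graph V E" and cg: "connected_graph V E"
    and minimal: "\<And>S. S \<subseteq> V \<Longrightarrow> card S + 1 = k \<Longrightarrow> \<not> removal_tree V E S"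
    using assms(1) unfolding gen_quasi_tree_def by blast+
  obtain S where S: "card S = k" "removal_tree V E S"
    using assms(1) unfolding gen_quasi_tree_def by blast
  have fin: "finite V" using sg unfolding simple_graph_def by blast
  have "S \<subseteq> V" "V - S \<noteq> {}"
    using S(2) unfolding removal_tree_def del_vertices_def is_tree_def connected_graph_def
    by auto
  then have "card S < card V" using fin by (metis Diff_eq_empty_iff psubsetI psubset_card_mono)
  moreover have "card V \<noteq> k + 1"
  proof
    assume card: "card V = k + 1"
    then obtain a b where ab: "a \<in> V" "b \<in> V" "a \<noteq> b"
      using assms(2) card_ge_2_obtain_distinct[of V] by auto
    obtain y where ay: "adj E a y" using connected_graph_ex_adj[OF cg ab] by blast
    have "y \<in> V" "y \<noteq> a" using simple_graph_adj_in_vertices[OF sg ay] ay unfolding adj_def by auto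
    then have "card (V - {a, y}) + 1 = k" using ab(1) card fin assms(2) by (simp add: card_Diff_subset)
    then show False
      using minimal removal_tree_complement_edge[OF sg ay ab(1)] by blast
  qed
  ultimately show ?thesis using S(1) by linarith
qed

definition join_to_all :: "nat set \<Rightarrow> nat set \<Rightarrow> nat set set \<Rightarrow> nat set set" where
  "join_to_all V S E = E \<union> {{s, v} | s v. s \<in> S \<and> v \<in> V \<and> s \<noteq> v}"

lemma subset_join_to_all: "E \<subseteq> join_to_all V S E"
  unfolding join_to_all_def by blast

lemma adj_join_to_all:
  assumes "s \<in> S" "v \<in> V" "s \<noteq> v"
  shows "adj (join_to_all V S E) s v" "adj (join_to_all V S E) v s"
  using assms adj_sym unfolding adj_def join_to_all_def by blast+

lemma simple_graph_join_to_all: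
  assumes "simple_graph V E" "S \<subseteq> V"
  shows "simple_graph V (join_to_all V S E)"
  using assms unfolding simple_graph_def join_to_all_def by blast

lemma del_vertices_join_to_all:
  "{e \<in> join_to_all V S E. e \<inter> S = {}} = {e \<in> E. e \<inter> S = {}}"
  unfolding join_to_all_def by blast

lemma removal_tree_join_to_all:
  assumes "removal_tree V E S"
  shows "removal_tree V (join_to_all V S E) S"
  using assms unfolding removal_tree_def del_vertices_def by (simp add: del_vertices_join_to_all)

lemma degree_join_to_all:
  assumes "finite V" "S \<subseteq> V" "s \<in> S"
  shows "degree V (join_to_all V S E) s = card V - 1"
proof -
  have "{u \<in> V. adj (join_to_all V S E) s u} = V - {s}"
    using adj_join_to_all(1)[OF assms(3)] unfolding adj_def by blast
  then show ?thesis unfolding degree_def using assms by auto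
qed

lemma not_removal_tree_join_to_all:
  assumes rt: "removal_tree V E S" and fin: "finite V" and card_V: "card V \<ge> card S + 2"
    and S': "S' \<subseteq> V" "card S' + 1 = card S"
  shows "\<not> removal_tree V (join_to_all V S E) S'"
proof
  let ?E = "join_to_all V S E"
  let ?W = "V - S'" and ?F = "{e \<in> ?E. e \<inter> S' = {}}"
  assume "removal_tree V ?E S'"
  then have acyclic: "\<not> has_cycle ?W ?F"
    unfolding removal_tree_def del_vertices_def is_tree_def by simp
  have adj_F: "adj ?F a b" if "a \<notin> S'" "b \<notin> S'" "adj ?E a b" for a b
    using that adj_del_vertices_iff by blast
  have SV: "S \<subseteq> V" using rt unfolding removal_tree_def by blast
  have finS: "finite S" and finS': "finite S'" using SV S'(1) fin finite_subset by blast+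
  show False
  proof (cases "S' \<subseteq> S")
    case True
    moreover have "S' \<noteq> S" using S'(2) by auto
    ultimately obtain s where s: "s \<in> S" "s \<notin> S'" by blast
    have tree: "is_tree (V - S) {e \<in> E. e \<inter> S = {}}"
      using rt unfolding removal_tree_def del_vertices_def by simp
    have "card (V - S) \<ge> 2" using card_V SV finS by (simp add: card_Diff_subset)
    then obtain u y where uy: "u \<in> V - S" "y \<in> V - S" "adj {e \<in> E. e \<inter> S = {}} u y"
      using tree_ex_edge[OF tree] by blast
    have out: "u \<notin> S'" "y \<notin> S'" "u \<noteq> s" "y \<noteq> s" using uy s True by auto
    have "adj E u y" using uy(3) adj_del_vertices_iff by blast
    then have "adj ?E u y" by (rule adj_mono[OF subset_join_to_all])
    moreover have "adj ?E s u" "adj ?E y s" using adj_join_to_all s uy out by auto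
    ultimately have "has_cycle ?W ?F"
      using has_cycle_triangle[of s ?W u y] adj_F s uy out SV by blast
    then show False using acyclic by blast
  next
    case False
    then have "card (S \<inter> S') < card S'" using finS' by (intro psubset_card_mono) auto
    then have "card (S - S') \<ge> 2" using S'(2) finS by (simp add: card_Diff_subset_Int)
    then obtain s s' where ss': "s \<in> S - S'" "s' \<in> S - S'" "s \<noteq> s'"
      using card_ge_2_obtain_distinct by blast
    have "card ?W \<ge> 3" using card_V S' finS' by (simp add: card_Diff_subset)
    moreover have "{s, s'} \<subseteq> ?W" using ss' SV by blast
    ultimately have "card (?W - {s, s'}) \<ge> 1" using ss'(3) by (simp add: card_Diff_subset)
    then have "?W - {s, s'} \<noteq> {}" by (metis card.empty not_one_le_zero)
    then obtain c where c: "c \<in> ?W" "c \<noteq> s" "c \<noteq> s'" by blast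
    have "adj ?E s s'" "adj ?E s' c" "adj ?E c s" using adj_join_to_all ss' c SV by auto
    then have "has_cycle ?W ?F"
      using has_cycle_triangle[of s ?W s' c] adj_F ss' c SV by blast
    then show False using acyclic by blast
  qed
qed

lemma gen_quasi_tree_join_to_all:
  assumes gq: "gen_quasi_tree k V E" and "k > 0" and S: "card S = k" "removal_tree V E S"
  shows "gen_quasi_tree k V (join_to_all V S E)"
proof -
  have sg: "simple_graph V E" and cg: "connected_graph V E"
    using gq unfolding gen_quasi_tree_def by blast+
  have fin: "finite V" using sg unfolding simple_graph_def by blast
  have SV: "S \<subseteq> V" using S(2) unfolding removal_tree_def by blast
  have "card V \<ge> card S + 2" using gen_quasi_tree_card_ge[OF gq \<open>k > 0\<close>] S(1) by simp
  then show ?thesis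
    unfolding gen_quasi_tree_def
    using simple_graph_join_to_all[OF sg SV] connected_graph_mono[OF cg subset_join_to_all]
      removal_tree_join_to_all[OF S(2)] not_removal_tree_join_to_all[OF S(2) fin] S(1)
    by metis
qed

lemma sum_powr_strict_mono:
  fixes f g :: "'a \<Rightarrow> nat"
  assumes "finite A" "\<alpha> > 0" "\<forall>x\<in>A. f x \<le> g x" "z \<in> A" "f z < g z"
  shows "(\<Sum>x\<in>A. real (f x) powr \<alpha>) < (\<Sum>x\<in>A. real (g x) powr \<alpha>)"
  using assms by (intro sum_strict_mono_ex1) (auto intro!: powr_mono2 powr_less_mono2)

lemma sum_powr_strict_antimono:
  fixes f g :: "'a \<Rightarrow> nat"
  assumes "finite A" "\<alpha> < 0" "\<forall>x\<in>A. 0 < f x \<and> f x \<le> g x" "z \<in> A" "f z < g z"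
  shows "(\<Sum>x\<in>A. real (g x) powr \<alpha>) < (\<Sum>x\<in>A. real (f x) powr \<alpha>)"
proof (rule sum_strict_mono_ex1[OF assms(1)])
  show "\<forall>x\<in>A. real (g x) powr \<alpha> \<le> real (f x) powr \<alpha>"
    using assms(2,3) by (auto intro!: powr_mono2')
  show "\<exists>x\<in>A. real (g x) powr \<alpha> < real (f x) powr \<alpha>"
    using assms by (intro bexI[of _ z] powr_less_mono2_neg) auto
qed

theorem mainTheorem7:
  fixes n k :: nat and V :: "nat set" and E :: "nat set set" and z :: nat and \<alpha> :: real
  assumes "0 < n" and "0 < k" and "T_class k n \<noteq> {}"
    and "(V, E) \<in> T_class k n" and "quasi_vertex k V E z"
  shows "(\<alpha> < 0 \<and> (\<forall>(V', E') \<in> T_class k n. zeroth_randic \<alpha> V E \<le> zeroth_randic \<alpha> V' E')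
            \<longrightarrow> degree V E z = n - 1)
       \<and> (\<alpha> > 0 \<and> (\<forall>(V', E') \<in> T_class k n. zeroth_randic \<alpha> V' E' \<le> zeroth_randic \<alpha> V E)
            \<longrightarrow> degree V E z = n - 1)"
proof -
  have card_V: "card V = n" and gq: "gen_quasi_tree k V E"
    using assms(4) unfolding T_class_def by auto
  then have sg: "simple_graph V E" and cg: "connected_graph V E" and fin: "finite V"
    unfolding gen_quasi_tree_def simple_graph_def by auto
  obtain S where S: "card S = k" "removal_tree V E S" "z \<in> S"
    using assms(5) unfolding quasi_vertex_def by blast
  have SV: "S \<subseteq> V" using S(2) unfolding removal_tree_def by blast
  define E' where "E' = join_to_all V S E"
  have in_class: "(V, E') \<in> T_class k n"
    unfolding T_class_def E'_def using gen_quasi_tree_join_to_all[OF gq assms(2) S(1,2)] card_V by simp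
  have "card V \<ge> 2" using gen_quasi_tree_card_ge[OF gq assms(2)] by simp
  then have degrees: "\<forall>v\<in>V. 0 < degree V E v \<and> degree V E v \<le> degree V E' v"
    using degree_pos[OF sg cg] degree_mono[OF fin subset_join_to_all] unfolding E'_def by fastforce
  have gain: "degree V E z < degree V E' z" if "degree V E z \<noteq> n - 1"
  proof -
    have "degree V E z \<le> n - 1" using degree_le_card[OF fin] S(3) SV card_V by blast
    then show ?thesis
      using that degree_join_to_all[OF fin SV S(3)] card_V unfolding E'_def by simp
  qed
  show ?thesis
  proof (intro conjI impI; rule ccontr)
    assume "\<alpha> < 0 \<and> (\<forall>(V', E') \<in> T_class k n. zeroth_randic \<alpha> V E \<le> zeroth_randic \<alpha> V' E')"
      and "degree V E z \<noteq> n - 1"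
    then show False
      using sum_powr_strict_antimono[OF fin _ degrees] gain in_class S(3) SV
      unfolding zeroth_randic_def by fastforce
  next
    assume "\<alpha> > 0 \<and> (\<forall>(V', E') \<in> T_class k n. zeroth_randic \<alpha> V' E' \<le> zeroth_randic \<alpha> V E)"
      and "degree V E z \<noteq> n - 1"
    then show False
      using sum_powr_strict_mono[OF fin _ _] degrees gain in_class S(3) SV
      unfolding zeroth_randic_def by fastforce
  qed
qed

end
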